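(* Let $\mathbb{R}^n_s$ be $\mathbb{R}^n$ with a non-degenerate symmetric bilinear form of signature $(n-s,s)$, let $G\subset\mathrm{Iso}(\mathbb{R}^n_s)$ be a real Zariski-closed subgroup whose centralizer $L=\mathrm{Z}_{\mathrm{Iso}(\mathbb{R}^n_s)}(G)$ acts transitively on $\mathbb{R}^n$, and let $U$ be the unipotent radical of $L$; assume $U$ acts transitively on $\mathbb{R}^n$. For $p\in\mathbb{R}^n$ let $F_p=G.p$, let $U_p$ be the stabilizer of $p$ in $U$, and let $U_{F_p}=\{u\in U\mid u.F_p\subseteq F_p\}$. Then $U_{F_p}$ is an algebraic subgroup of $U$ acting transitively on $F_p$, and $U_p$ is a normal subgroup of $U_{F_p}$. *)

theory Defs
  imports "HOL-Analysis.Analysis" "HOL-Algebra.Coset"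
begin

text \<open>An element of Iso(R^n_s) is an affine map x \<mapsto> A x + b, represented by the pair (A, b).
  The non-degenerate symmetric bilinear form is (x,y) \<mapsto> x \<bullet> (J *v y) for a symmetric
  invertible matrix J.\<close>

type_synonym ('n) aff = "(real^'n^'n) \<times> (real^'n)"

definition nondeg_sym_form :: "real^('n::finite)^'n \<Rightarrow> bool" where
  "nondeg_sym_form J \<longleftrightarrow> transpose J = J \<and> invertible J"

definition aff_act :: "('n::finite) aff \<Rightarrow> real^'n \<Rightarrow> real^'n" where
  "aff_act g x = fst g *v x + snd g"

definition iso_group :: "real^('n::finite)^'n \<Rightarrow> 'n aff monoid" where
  "iso_group J = \<lparr> carrier = {(A, b). transpose A ** J ** A = J},
                   mult = (\<lambda>(A, b) (C, d). (A ** C, A *v d + b)),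
                   one = (mat 1, 0) \<rparr>"

inductive_set poly_fun :: "(('n::finite) aff \<Rightarrow> real) set" where
  const: "(\<lambda>_. c) \<in> poly_fun"
| coordA: "(\<lambda>g. fst g $ i $ j) \<in> poly_fun"
| coordb: "(\<lambda>g. snd g $ i) \<in> poly_fun"
| add: "f \<in> poly_fun \<Longrightarrow> h \<in> poly_fun \<Longrightarrow> (\<lambda>g. f g + h g) \<in> poly_fun"
| mult: "f \<in> poly_fun \<Longrightarrow> h \<in> poly_fun \<Longrightarrow> (\<lambda>g. f g * h g) \<in> poly_fun"

definition zariski_closed_in :: "('n::finite) aff set \<Rightarrow> 'n aff set \<Rightarrow> bool" where
  "zariski_closed_in X S \<longleftrightarrow> (\<exists>P \<subseteq> poly_fun. S = {g \<in> X. \<forall>f \<in> P. f g = 0})"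

definition algebraic_subgroup :: "real^('n::finite)^'n \<Rightarrow> 'n aff set \<Rightarrow> bool" where
  "algebraic_subgroup J H \<longleftrightarrow> subgroup H (iso_group J) \<and> zariski_closed_in (carrier (iso_group J)) H"

definition centralizer_in :: "real^('n::finite)^'n \<Rightarrow> 'n aff set \<Rightarrow> 'n aff set" where
  "centralizer_in J G = {l \<in> carrier (iso_group J). \<forall>g \<in> G.
      l \<otimes>\<^bsub>iso_group J\<^esub> g = g \<otimes>\<^bsub>iso_group J\<^esub> l}"

text \<open>(A,b) is unipotent iff its (n+1)x(n+1) affine matrix is unipotent, iff A - 1 is nilpotent.\<close>
definition unipotent :: "('n::finite) aff \<Rightarrow> bool" where
  "unipotent g \<longleftrightarrow> (\<exists>k. ((\<lambda>M. (fst g - mat 1) ** M) ^^ k) (mat 1) = 0)"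

text \<open>Unipotent radical of an algebraic group L: the largest normal unipotent algebraic subgroup
  (unipotent algebraic groups are connected in characteristic 0).\<close>
definition is_unipotent_radical :: "real^('n::finite)^'n \<Rightarrow> 'n aff set \<Rightarrow> 'n aff set \<Rightarrow> bool" where
  "is_unipotent_radical J L U \<longleftrightarrow>
     algebraic_subgroup J U \<and> U \<subseteq> L \<and> normal U ((iso_group J)\<lparr>carrier := L\<rparr>) \<and> (\<forall>u \<in> U. unipotent u) \<and>
     (\<forall>V. algebraic_subgroup J V \<and> V \<subseteq> L \<and> normal V ((iso_group J)\<lparr>carrier := L\<rparr>) \<and> (\<forall>v \<in> V. unipotent v)
          \<longrightarrow> V \<subseteq> U)"

definition acts_transitively_on :: "('n::finite) aff set \<Rightarrow> (real^'n) set \<Rightarrow> bool" where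
  "acts_transitively_on H X \<longleftrightarrow> (\<forall>x \<in> X. \<forall>y \<in> X. \<exists>h \<in> H. aff_act h x = y)"

end

theory Submission
  imports Defs
begin

text \<open>Since \<open>U\<close> commutes with \<open>G\<close>, an element \<open>u \<in> U\<close> preserves the orbit \<open>F_p = G.p\<close> as soon
  as it maps \<open>p\<close> into \<open>F_p\<close>; everything except algebraicity is then elementary group theory
  (\<open>U_p\<close> even fixes \<open>F_p\<close> pointwise). For algebraicity, note that for \<open>g\<close> centralizing the
  transitive group \<open>U\<close> the affine map \<open>g - 1\<close> is determined by its value at \<open>p\<close>, and linearly
  so. Hence there is a polynomial map \<open>h\<close> with \<open>h u = g\<close> whenever \<open>u.p = g.p\<close>, and
  \<open>U_{F_p} = {u \<in> U. h u \<in> G \<and> (h u).p = u.p}\<close> is Zariski closed.\<close>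

lemma iso_group_mult: "x \<otimes>\<^bsub>iso_group J\<^esub> y = (fst x ** fst y, fst x *v snd y + snd x)"
  by (cases x, cases y) (simp add: iso_group_def)

lemma iso_group_one: "\<one>\<^bsub>iso_group J\<^esub> = (mat 1, 0)"
  by (simp add: iso_group_def)

lemma mem_carrier_iso_group: "x \<in> carrier (iso_group J) \<longleftrightarrow> transpose (fst x) ** J ** fst x = J"
  by (cases x) (simp add: iso_group_def)

lemma aff_act_mult: "aff_act (x \<otimes>\<^bsub>iso_group J\<^esub> y) v = aff_act x (aff_act y v)"
  by (simp add: aff_act_def iso_group_mult matrix_vector_mul_assoc[symmetric]
      matrix_vector_right_distrib algebra_simps)

lemma aff_act_one: "aff_act \<one>\<^bsub>iso_group J\<^esub> v = v"
  by (simp add: aff_act_def iso_group_one)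

lemma group_iso_group:
  assumes "nondeg_sym_form J"
  shows "group (iso_group J)"
proof (rule groupI)
  obtain Ji where Ji: "J ** Ji = mat 1" "Ji ** J = mat 1"
    using assms unfolding nondeg_sym_form_def invertible_def by blast
  have JT: "transpose J = J" using assms unfolding nondeg_sym_form_def by blast
  have TJi: "transpose Ji ** J = mat 1"
    by (metis Ji(1) JT matrix_transpose_mul transpose_mat)
  fix x assume x: "x \<in> carrier (iso_group J)"
  obtain A b where xe: "x = (A, b)" by (cases x)
  have AJ: "transpose A ** J ** A = J" using x xe by (simp add: mem_carrier_iso_group)
  define B where "B = Ji ** transpose A ** J"
  have "B ** A = Ji ** (transpose A ** J ** A)" by (simp add: B_def matrix_mul_assoc)
  then have BA: "B ** A = mat 1" by (simp add: AJ Ji)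
  then have AB: "A ** B = mat 1" using matrix_left_right_inverse by blast
  have "transpose B ** J ** B = J ** A ** (transpose Ji ** J) ** B"
    by (simp add: B_def matrix_transpose_mul JT matrix_mul_assoc)
  also have "\<dots> = J ** (A ** B)" by (simp add: TJi matrix_mul_assoc)
  also have "\<dots> = J" by (simp add: AB)
  finally have "(B, - (B *v b)) \<in> carrier (iso_group J)" by (simp add: mem_carrier_iso_group)
  moreover have "(B, - (B *v b)) \<otimes>\<^bsub>iso_group J\<^esub> x = \<one>\<^bsub>iso_group J\<^esub>"
    by (simp add: iso_group_mult iso_group_one xe BA)
  ultimately show "\<exists>y \<in> carrier (iso_group J). y \<otimes>\<^bsub>iso_group J\<^esub> x = \<one>\<^bsub>iso_group J\<^esub>" by blast
next
  fix x y assume "x \<in> carrier (iso_group J)" "y \<in> carrier (iso_group J)"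
  then show "x \<otimes>\<^bsub>iso_group J\<^esub> y \<in> carrier (iso_group J)"
    by (simp add: mem_carrier_iso_group iso_group_mult matrix_transpose_mul matrix_mul_assoc)
       (metis matrix_mul_assoc)
qed (simp_all add: mem_carrier_iso_group iso_group_mult iso_group_one matrix_mul_assoc
       matrix_vector_mul_assoc matrix_vector_right_distrib algebra_simps)

lemma aff_act_inv_cancel:
  assumes "group (iso_group J)" and "g \<in> carrier (iso_group J)"
  shows "aff_act (inv\<^bsub>iso_group J\<^esub> g) (aff_act g x) = x"
    and "aff_act g (aff_act (inv\<^bsub>iso_group J\<^esub> g) x) = x"
  using group.l_inv[OF assms] group.r_inv[OF assms]
  by (metis aff_act_mult aff_act_one)+

lemma aff_act_diff: "aff_act u y - aff_act u x = fst u *v (y - x)"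
  by (simp add: aff_act_def matrix_vector_right_distrib algebra_simps)

lemma linear_aff_act_left: "linear (\<lambda>d. aff_act d x)"
  by (rule linearI)
     (simp_all add: aff_act_def matrix_vector_mult_add_rdistrib scaleR_matrix_vector_assoc[symmetric]
       scaleR_right_distrib)

subsection \<open>Polynomial functions and Zariski-closed sets\<close>

lemma poly_fun_uminus: "f \<in> poly_fun \<Longrightarrow> (\<lambda>g. - f g) \<in> poly_fun"
  using poly_fun.mult[OF poly_fun.const[of "-1"], of f] by simp

lemma poly_fun_diff: "f \<in> poly_fun \<Longrightarrow> h \<in> poly_fun \<Longrightarrow> (\<lambda>g. f g - h g) \<in> poly_fun"
  using poly_fun.add[of f "\<lambda>g. - h g"] poly_fun_uminus[of h] by simp

lemma poly_fun_sum:
  fixes F :: "'n::finite aff \<Rightarrow> 'k \<Rightarrow> real"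
  assumes "finite S" and "\<And>k. k \<in> S \<Longrightarrow> (\<lambda>g. F g k) \<in> poly_fun"
  shows "(\<lambda>g. \<Sum>k\<in>S. F g k) \<in> poly_fun"
  using assms
proof (induction S rule: finite_induct)
  case empty then show ?case using poly_fun.const[of 0] by simp
next
  case (insert x S)
  then have "(\<lambda>g. F g x + (\<Sum>k\<in>S. F g k)) \<in> poly_fun" by (intro poly_fun.add) auto
  then show ?case using insert by simp
qed

definition poly_map :: "('m::finite aff \<Rightarrow> 'n::finite aff) \<Rightarrow> bool" where
  "poly_map h \<longleftrightarrow> (\<forall>i j. (\<lambda>g. fst (h g) $ i $ j) \<in> poly_fun) \<and> (\<forall>i. (\<lambda>g. snd (h g) $ i) \<in> poly_fun)"

lemma poly_fun_compose:
  assumes "f \<in> poly_fun" and "poly_map h"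
  shows "(\<lambda>g. f (h g)) \<in> poly_fun"
  using assms(1)
proof induction
  case (const c) then show ?case by (rule poly_fun.const)
qed (use assms(2) in \<open>auto simp: poly_map_def intro: poly_fun.add poly_fun.mult\<close>)

lemma poly_fun_aff_act: "(\<lambda>g. aff_act g p $ i) \<in> poly_fun"
proof -
  have eq: "aff_act g p $ i = (\<Sum>j\<in>UNIV. fst g $ i $ j * p $ j) + snd g $ i" for g
    by (simp add: aff_act_def matrix_vector_mult_def)
  show ?thesis unfolding eq
    by (intro poly_fun.add poly_fun_sum poly_fun.mult poly_fun.coordA poly_fun.coordb
        poly_fun.const) simp_all
qed

lemma poly_fun_linear_comp:
  fixes \<phi> :: "real^'m::finite \<Rightarrow> real" and w :: "'n::finite aff \<Rightarrow> real^'m"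
  assumes "linear \<phi>" and "\<And>k. (\<lambda>g. w g $ k) \<in> poly_fun"
  shows "(\<lambda>g. \<phi> (w g)) \<in> poly_fun"
proof -
  have eq: "\<phi> (w g) = (\<Sum>k\<in>UNIV. w g $ k * \<phi> (axis k 1))" for g
  proof -
    have "\<phi> (w g) = \<phi> (\<Sum>k\<in>UNIV. w g $ k *\<^sub>R axis k 1)"
      using basis_expansion[of "w g"] by (simp add: scalar_mult_eq_scaleR)
    also have "\<dots> = (\<Sum>k\<in>UNIV. w g $ k * \<phi> (axis k 1))"
      by (simp add: linear_sum[OF assms(1)] linear_scale[OF assms(1)])
    finally show ?thesis .
  qed
  show ?thesis unfolding eq
    by (intro poly_fun_sum poly_fun.mult assms(2) poly_fun.const) simp_all
qed

lemma zariski_closed_carrier_iso_group: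
  fixes J :: "real^'n::finite^'n"
  shows "\<exists>P \<subseteq> poly_fun. carrier (iso_group J) = {g. \<forall>f\<in>P. f g = 0}"
proof -
  define P :: "('n::finite aff \<Rightarrow> real) set" where
    "P = {(\<lambda>g. (transpose (fst g) ** J ** fst g) $ i $ j - J $ i $ j) | i j. True}"
  have eq: "(transpose A ** J ** A) $ i $ j = (\<Sum>k\<in>UNIV. (\<Sum>l\<in>UNIV. A $ l $ i * J $ l $ k) * A $ k $ j)"
    for A :: "real^'n^'n" and i j
    by (simp add: matrix_matrix_mult_def transpose_def)
  have "P \<subseteq> poly_fun"
    unfolding P_def eq
    by (auto intro!: poly_fun_diff poly_fun_sum poly_fun.mult poly_fun.coordA poly_fun.const)
  moreover have "g \<in> carrier (iso_group J) \<longleftrightarrow> (\<forall>f\<in>P. f g = 0)" for g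
  proof -
    have "g \<in> carrier (iso_group J) \<longleftrightarrow>
          (\<forall>i j. (transpose (fst g) ** J ** fst g) $ i $ j - J $ i $ j = 0)"
      by (simp add: mem_carrier_iso_group vec_eq_iff)
    also have "\<dots> \<longleftrightarrow> (\<forall>f\<in>P. f g = 0)" unfolding P_def by force
    finally show ?thesis .
  qed
  ultimately show ?thesis by blast
qed

lemma zariski_closed_in_Int:
  assumes "zariski_closed_in X S" and "zariski_closed_in X T"
  shows "zariski_closed_in X (S \<inter> T)"
proof -
  obtain PS PT where "PS \<subseteq> poly_fun" "S = {g \<in> X. \<forall>f\<in>PS. f g = 0}"
    and "PT \<subseteq> poly_fun" "T = {g \<in> X. \<forall>f\<in>PT. f g = 0}"
    using assms unfolding zariski_closed_in_def by blast
  then have "PS \<union> PT \<subseteq> poly_fun" "S \<inter> T = {g \<in> X. \<forall>f\<in>PS \<union> PT. f g = 0}" by auto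
  then show ?thesis unfolding zariski_closed_in_def by blast
qed

lemma zariski_closed_in_equalizer:
  fixes a b :: "'n::finite aff \<Rightarrow> real^'m::finite"
  assumes "\<And>i. (\<lambda>g. a g $ i) \<in> poly_fun" and "\<And>i. (\<lambda>g. b g $ i) \<in> poly_fun"
  shows "zariski_closed_in X {g \<in> X. a g = b g}"
proof -
  let ?P = "range (\<lambda>i g. a g $ i - b g $ i)"
  have "?P \<subseteq> poly_fun" using assms by (auto intro: poly_fun_diff)
  moreover have "{g \<in> X. a g = b g} = {g \<in> X. \<forall>f\<in>?P. f g = 0}" by (auto simp: vec_eq_iff)
  ultimately show ?thesis unfolding zariski_closed_in_def by blast
qed

lemma zariski_closed_in_preimage:
  assumes X: "P \<subseteq> poly_fun" "X = {g. \<forall>f\<in>P. f g = 0}"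
    and h: "poly_map h" and S: "zariski_closed_in X S"
  shows "zariski_closed_in X {g \<in> X. h g \<in> S}"
proof -
  obtain PS where PS: "PS \<subseteq> poly_fun" "S = {g \<in> X. \<forall>f\<in>PS. f g = 0}"
    using S unfolding zariski_closed_in_def by blast
  let ?Q = "(\<lambda>f g. f (h g)) ` (P \<union> PS)"
  have "?Q \<subseteq> poly_fun" using X(1) PS(1) poly_fun_compose[OF _ h] by blast
  moreover have "{g \<in> X. h g \<in> S} = {g \<in> X. \<forall>f\<in>?Q. f g = 0}" using X(2) PS(2) by auto
  ultimately show ?thesis unfolding zariski_closed_in_def by blast
qed

subsection \<open>The affine commutant of a group of affine maps\<close>

text \<open>A pair \<open>d = (M, c)\<close> stands for the affine matrix \<open>[[M, c], [0, 0]]\<close>; it commutes with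
  \<open>[[A, b], [0, 1]]\<close> exactly when \<open>M A = A M\<close> and \<open>M b + c = A c\<close>, i.e. when the affine map
  \<open>x \<mapsto> M x + c\<close> intertwines the action of \<open>(A, b)\<close> with its linear part \<open>A\<close>.\<close>

definition aff_commutant :: "('n::finite) aff set \<Rightarrow> 'n aff set" where
  "aff_commutant U = {d. \<forall>u\<in>U. \<forall>x. aff_act d (aff_act u x) = fst u *v aff_act d x}"

lemma subspace_aff_commutant: "subspace (aff_commutant U)"
  unfolding subspace_def aff_commutant_def
  by (simp add: linear_0[OF linear_aff_act_left] linear_add[OF linear_aff_act_left]
      linear_scale[OF linear_aff_act_left] matrix_vector_right_distrib matrix_vector_mult_scaleR)

lemma aff_commutant_eq_zero:
  assumes d: "d \<in> aff_commutant U" and tr: "acts_transitively_on U UNIV"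
    and p: "aff_act d p = 0"
  shows "d = 0"
proof -
  have vanish: "aff_act d x = 0" for x
  proof -
    obtain u where "u \<in> U" "aff_act u p = x" using tr unfolding acts_transitively_on_def by blast
    then show ?thesis using d p unfolding aff_commutant_def by force
  qed
  then have "snd d = 0" by (metis aff_act_def add_0 matrix_vector_mult_0_right)
  moreover have "fst d = 0" using vanish \<open>snd d = 0\<close> by (simp add: aff_act_def matrix_eq)
  ultimately show ?thesis by (simp add: prod_eq_iff)
qed

lemma diff_one_in_aff_commutant:
  assumes "\<And>u. u \<in> U \<Longrightarrow> u \<otimes>\<^bsub>iso_group J\<^esub> g = g \<otimes>\<^bsub>iso_group J\<^esub> u"
  shows "(fst g - mat 1, snd g) \<in> aff_commutant U"
proof -
  have shift: "aff_act (fst g - mat 1, snd g) x = aff_act g x - x" for x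
    by (simp add: aff_act_def matrix_vector_mult_diff_rdistrib)
  have "aff_act g (aff_act u x) - aff_act u x = fst u *v (aff_act g x - x)" if "u \<in> U" for u x
    using aff_act_mult[of J u g x] aff_act_mult[of J g u x] assms[OF that] aff_act_diff[of u] by simp
  then show ?thesis by (simp add: aff_commutant_def shift)
qed

text \<open>Since evaluation at \<open>p\<close> is injective on the commutant, an element commuting with a
  transitive \<open>U\<close> is a linear, hence polynomial, function of the image of \<open>p\<close>.\<close>

lemma poly_map_recovering_centralizer:
  fixes U :: "('n::finite) aff set"
  assumes "acts_transitively_on U UNIV"
  obtains h where "poly_map h"
    and "\<And>g g'. (\<And>u. u \<in> U \<Longrightarrow> u \<otimes>\<^bsub>iso_group J\<^esub> g = g \<otimes>\<^bsub>iso_group J\<^esub> u) \<Longrightarrow>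
                aff_act g' p = aff_act g p \<Longrightarrow> h g' = g"
proof -
  have "inj_on (\<lambda>d. aff_act d p) (aff_commutant U)"
  proof (rule inj_onI)
    fix d e assume de: "d \<in> aff_commutant U" "e \<in> aff_commutant U" "aff_act d p = aff_act e p"
    have "d - e \<in> aff_commutant U" using subspace_diff[OF subspace_aff_commutant de(1,2)] .
    moreover have "aff_act (d - e) p = 0" by (simp add: linear_diff[OF linear_aff_act_left] de(3))
    ultimately show "d = e" using aff_commutant_eq_zero[OF _ assms] by fastforce
  qed
  then obtain \<Psi> where \<Psi>: "linear \<Psi>" "\<And>d. d \<in> aff_commutant U \<Longrightarrow> \<Psi> (aff_act d p) = d"
    using linear_exists_left_inverse_on[OF linear_aff_act_left subspace_aff_commutant] by blast
  define h :: "'n aff \<Rightarrow> 'n aff" where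
    "h g = (mat 1 + fst (\<Psi> (aff_act g p - p)), snd (\<Psi> (aff_act g p - p)))" for g
  have lin: "linear (\<lambda>v. fst (\<Psi> v) $ i $ j)" "linear (\<lambda>v. snd (\<Psi> v) $ i)" for i j
    by (simp_all add: linearI linear_add[OF \<Psi>(1)] linear_scale[OF \<Psi>(1)])
  have "(\<lambda>g. (aff_act g p - p) $ k) \<in> poly_fun" for k
    by (simp only: vector_minus_component) (intro poly_fun_diff poly_fun_aff_act poly_fun.const)
  then have "(\<lambda>g. fst (\<Psi> (aff_act g p - p)) $ i $ j) \<in> poly_fun"
    "(\<lambda>g. snd (\<Psi> (aff_act g p - p)) $ i) \<in> poly_fun" for i j
    by (rule poly_fun_linear_comp[OF lin(1)], rule poly_fun_linear_comp[OF lin(2)])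
  then have "poly_map h"
    unfolding poly_map_def h_def by (simp add: poly_fun.add poly_fun.const)
  moreover have "h g' = g" if "\<And>u. u \<in> U \<Longrightarrow> u \<otimes>\<^bsub>iso_group J\<^esub> g = g \<otimes>\<^bsub>iso_group J\<^esub> u"
    and "aff_act g' p = aff_act g p" for g g'
  proof -
    have "aff_act (fst g - mat 1, snd g) p = aff_act g' p - p"
      using that(2) by (simp add: aff_act_def matrix_vector_mult_diff_rdistrib)
    then have "\<Psi> (aff_act g' p - p) = (fst g - mat 1, snd g)"
      using \<Psi>(2)[OF diff_one_in_aff_commutant[OF that(1)]] by simp
    then show ?thesis by (simp add: h_def prod_eq_iff)
  qed
  ultimately show ?thesis using that by blast
qed

subsection \<open>Stabilizers of an orbit of a centralized group\<close>

locale centralizing_subgroups =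
  fixes J :: "real^'n::finite^'n" and G U :: "'n aff set"
  assumes group_iso: "group (iso_group J)"
    and subgroup_G: "subgroup G (iso_group J)"
    and subgroup_U: "subgroup U (iso_group J)"
    and commute: "\<And>u g. u \<in> U \<Longrightarrow> g \<in> G \<Longrightarrow> u \<otimes>\<^bsub>iso_group J\<^esub> g = g \<otimes>\<^bsub>iso_group J\<^esub> u"
begin

abbreviation orbit :: "real^'n \<Rightarrow> (real^'n) set" where
  "orbit p \<equiv> (\<lambda>g. aff_act g p) ` G"

abbreviation orbit_stabilizer :: "real^'n \<Rightarrow> 'n aff set" where
  "orbit_stabilizer p \<equiv> {u \<in> U. aff_act u ` orbit p \<subseteq> orbit p}"

abbreviation point_stabilizer :: "real^'n \<Rightarrow> 'n aff set" where
  "point_stabilizer p \<equiv> {u \<in> U. aff_act u p = p}"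

lemma aff_act_commute: "u \<in> U \<Longrightarrow> g \<in> G \<Longrightarrow> aff_act u (aff_act g x) = aff_act g (aff_act u x)"
  by (metis aff_act_mult commute)

lemma aff_act_inv_G:
  assumes "g \<in> G"
  shows "aff_act (inv\<^bsub>iso_group J\<^esub> g) (aff_act g x) = x"
  using aff_act_inv_cancel(1)[OF group_iso] subgroup.subset[OF subgroup_G] assms by blast

lemma aff_act_orbit:
  assumes "g \<in> G" and "y \<in> orbit p"
  shows "aff_act g y \<in> orbit p"
proof -
  obtain g' where "g' \<in> G" "y = aff_act g' p" using assms(2) by blast
  then have "aff_act g y = aff_act (g \<otimes>\<^bsub>iso_group J\<^esub> g') p" "g \<otimes>\<^bsub>iso_group J\<^esub> g' \<in> G"
    using subgroup.m_closed[OF subgroup_G assms(1)] by (simp_all add: aff_act_mult)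
  then show ?thesis by blast
qed

lemma aff_act_inv_orbit: "g \<in> G \<Longrightarrow> y \<in> orbit p \<Longrightarrow> aff_act (inv\<^bsub>iso_group J\<^esub> g) y \<in> orbit p"
  using aff_act_orbit subgroup.m_inv_closed[OF subgroup_G] by blast

lemma mem_orbit_stabilizer_iff:
  assumes "u \<in> U" and "y \<in> orbit p"
  shows "u \<in> orbit_stabilizer p \<longleftrightarrow> aff_act u y \<in> orbit p"
proof
  assume "aff_act u y \<in> orbit p"
  moreover obtain g where g: "g \<in> G" "y = aff_act g p" using assms(2) by blast
  moreover have "aff_act u p = aff_act (inv\<^bsub>iso_group J\<^esub> g) (aff_act u y)"
    using g aff_act_commute[OF assms(1) g(1)] aff_act_inv_G by simp
  ultimately have up: "aff_act u p \<in> orbit p" using aff_act_inv_orbit[OF g(1)] by simp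
  have "aff_act u z \<in> orbit p" if "z \<in> orbit p" for z
    using that up aff_act_commute[OF assms(1)] aff_act_orbit by auto
  then show "u \<in> orbit_stabilizer p" using assms(1) by blast
qed (use assms in blast)

lemma point_stabilizer_fixes_orbit:
  assumes "u \<in> point_stabilizer p" and "y \<in> orbit p"
  shows "aff_act u y = y"
proof -
  obtain g where "g \<in> G" "y = aff_act g p" using assms(2) by blast
  then show ?thesis using assms(1) aff_act_commute[of u g p] by simp
qed

lemma mem_orbit_self: "p \<in> orbit p"
  using subgroup.one_closed[OF subgroup_G] aff_act_one by (metis image_eqI)

lemma aff_act_orbit_stabilizer: "u \<in> orbit_stabilizer p \<Longrightarrow> y \<in> orbit p \<Longrightarrow> aff_act u y \<in> orbit p"
  by blast

lemma inv_mem_orbit_stabilizer: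
  assumes u: "u \<in> orbit_stabilizer p"
  shows "inv\<^bsub>iso_group J\<^esub> u \<in> orbit_stabilizer p"
proof -
  have uU: "u \<in> U" using u by blast
  have up: "aff_act u p \<in> orbit p" using u mem_orbit_self by blast
  have "aff_act (inv\<^bsub>iso_group J\<^esub> u) (aff_act u p) = p"
    using uU subgroup.subset[OF subgroup_U] by (intro aff_act_inv_cancel(1)[OF group_iso]) blast
  then show ?thesis
    using mem_orbit_stabilizer_iff[OF subgroup.m_inv_closed[OF subgroup_U uU] up] mem_orbit_self
    by simp
qed

lemma subgroup_orbit_stabilizer: "subgroup (orbit_stabilizer p) (iso_group J)"
proof (rule group.subgroupI[OF group_iso])
  show "orbit_stabilizer p \<subseteq> carrier (iso_group J)" using subgroup.subset[OF subgroup_U] by blast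
  have "\<one>\<^bsub>iso_group J\<^esub> \<in> orbit_stabilizer p"
    by (rule mem_orbit_stabilizer_iff[OF subgroup.one_closed[OF subgroup_U] mem_orbit_self, THEN iffD2])
      (simp only: aff_act_one mem_orbit_self)
  then show "orbit_stabilizer p \<noteq> {}" by blast
next
  fix a b assume a: "a \<in> orbit_stabilizer p" and b: "b \<in> orbit_stabilizer p"
  have "aff_act a (aff_act b p) \<in> orbit p"
    using aff_act_orbit_stabilizer[OF a aff_act_orbit_stabilizer[OF b mem_orbit_self]] .
  then have "aff_act (a \<otimes>\<^bsub>iso_group J\<^esub> b) p \<in> orbit p" by (simp only: aff_act_mult)
  moreover have "a \<otimes>\<^bsub>iso_group J\<^esub> b \<in> U"
    using a b subgroup.m_closed[OF subgroup_U] by blast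
  ultimately show "a \<otimes>\<^bsub>iso_group J\<^esub> b \<in> orbit_stabilizer p"
    using mem_orbit_stabilizer_iff[OF _ mem_orbit_self] by blast
qed (rule inv_mem_orbit_stabilizer)

lemma transitive_orbit_stabilizer:
  assumes "acts_transitively_on U UNIV"
  shows "acts_transitively_on (orbit_stabilizer p) (orbit p)"
  unfolding acts_transitively_on_def
proof (intro ballI)
  fix x y assume xy: "x \<in> orbit p" "y \<in> orbit p"
  obtain u where u: "u \<in> U" "aff_act u x = y"
    using assms unfolding acts_transitively_on_def by blast
  then have "u \<in> orbit_stabilizer p" using mem_orbit_stabilizer_iff[OF u(1) xy(1)] xy(2) by blast
  then show "\<exists>u\<in>orbit_stabilizer p. aff_act u x = y" using u(2) by blast
qed

lemma subgroup_point_stabilizer: "subgroup (point_stabilizer p) (iso_group J)"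
proof (rule group.subgroupI[OF group_iso])
  show "point_stabilizer p \<subseteq> carrier (iso_group J)" using subgroup.subset[OF subgroup_U] by blast
  have "\<one>\<^bsub>iso_group J\<^esub> \<in> point_stabilizer p"
    using subgroup.one_closed[OF subgroup_U] by (simp add: aff_act_one)
  then show "point_stabilizer p \<noteq> {}" by blast
next
  fix a assume a: "a \<in> point_stabilizer p"
  then have "aff_act (inv\<^bsub>iso_group J\<^esub> a) p = aff_act (inv\<^bsub>iso_group J\<^esub> a) (aff_act a p)" by simp
  also have "\<dots> = p"
    using a subgroup.subset[OF subgroup_U] by (intro aff_act_inv_cancel(1)[OF group_iso]) blast
  finally show "inv\<^bsub>iso_group J\<^esub> a \<in> point_stabilizer p"
    using a subgroup.m_inv_closed[OF subgroup_U] by blast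
next
  fix a b assume "a \<in> point_stabilizer p" "b \<in> point_stabilizer p"
  then show "a \<otimes>\<^bsub>iso_group J\<^esub> b \<in> point_stabilizer p"
    using subgroup.m_closed[OF subgroup_U] by (simp add: aff_act_mult)
qed

text \<open>\<open>U_p\<close> fixes the whole orbit \<open>G.p\<close>, which \<open>u \<in> U_{F_p}\<close> preserves, so the conjugate
  \<open>u h u\<inverse>\<close> of \<open>h \<in> U_p\<close> fixes \<open>p = u (u\<inverse> p)\<close>.\<close>

lemma normal_point_stabilizer:
  "point_stabilizer p \<lhd> (iso_group J)\<lparr>carrier := orbit_stabilizer p\<rparr>"
proof -
  let ?K = "(iso_group J)\<lparr>carrier := orbit_stabilizer p\<rparr>"
  have "point_stabilizer p \<subseteq> orbit_stabilizer p"
  proof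
    fix u assume "u \<in> point_stabilizer p"
    then have "u \<in> U" "aff_act u p \<in> orbit p" using mem_orbit_self by auto
    then show "u \<in> orbit_stabilizer p" using mem_orbit_stabilizer_iff[OF _ mem_orbit_self] by blast
  qed
  then have "subgroup (point_stabilizer p) ?K"
    using group.subgroup_incl[OF group_iso subgroup_point_stabilizer subgroup_orbit_stabilizer]
    by blast
  moreover have "u \<otimes>\<^bsub>?K\<^esub> h \<otimes>\<^bsub>?K\<^esub> inv\<^bsub>?K\<^esub> u \<in> point_stabilizer p"
    if u: "u \<in> carrier ?K" and h: "h \<in> point_stabilizer p" for u h
  proof -
    let ?v = "inv\<^bsub>iso_group J\<^esub> u"
    have uK: "u \<in> orbit_stabilizer p" using u by simp
    have uU: "u \<in> U" and hU: "h \<in> U" using uK h by blast+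
    have inv: "inv\<^bsub>?K\<^esub> u = ?v"
      using group.m_inv_consistent[OF group_iso subgroup_orbit_stabilizer uK] .
    have "aff_act ?v p \<in> orbit p"
      using aff_act_orbit_stabilizer[OF inv_mem_orbit_stabilizer[OF uK] mem_orbit_self] .
    then have "aff_act h (aff_act ?v p) = aff_act ?v p"
      by (rule point_stabilizer_fixes_orbit[OF h])
    moreover have "u \<in> carrier (iso_group J)" using uU subgroup.subset[OF subgroup_U] by blast
    ultimately have "aff_act (u \<otimes>\<^bsub>iso_group J\<^esub> h \<otimes>\<^bsub>iso_group J\<^esub> ?v) p = p"
      by (simp add: aff_act_mult aff_act_inv_cancel(2)[OF group_iso])
    moreover have "u \<otimes>\<^bsub>iso_group J\<^esub> h \<otimes>\<^bsub>iso_group J\<^esub> ?v \<in> U"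
      by (intro subgroup.m_closed[OF subgroup_U] subgroup.m_inv_closed[OF subgroup_U] uU hU)
    ultimately show ?thesis using inv by simp
  qed
  ultimately show ?thesis
    using group.normal_inv_iff[OF subgroup.subgroup_is_group[OF subgroup_orbit_stabilizer group_iso]]
    by blast
qed

text \<open>With \<open>h\<close> the polynomial map recovering \<open>g \<in> G\<close> from \<open>g.p\<close>, \<open>U_{F_p}\<close> consists of those
  \<open>u \<in> U\<close> with \<open>h u \<in> G\<close> and \<open>(h u).p = u.p\<close>.\<close>

lemma zariski_closed_orbit_stabilizer:
  assumes "zariski_closed_in (carrier (iso_group J)) G"
    and "zariski_closed_in (carrier (iso_group J)) U"
    and "acts_transitively_on U UNIV"
  shows "zariski_closed_in (carrier (iso_group J)) (orbit_stabilizer p)"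
proof -
  let ?X = "carrier (iso_group J)"
  obtain h where h: "poly_map h"
    and recover: "\<And>g u. g \<in> G \<Longrightarrow> aff_act u p = aff_act g p \<Longrightarrow> h u = g"
    using poly_map_recovering_centralizer[OF assms(3), where p = p and J = J] commute by metis
  obtain P where P: "P \<subseteq> poly_fun" "?X = {g. \<forall>f\<in>P. f g = 0}"
    using zariski_closed_carrier_iso_group by blast
  have "orbit_stabilizer p = U \<inter> {u \<in> ?X. h u \<in> G} \<inter> {u \<in> ?X. aff_act (h u) p = aff_act u p}"
    (is "_ = U \<inter> ?S \<inter> ?T")
  proof (intro equalityI subsetI)
    fix u assume u: "u \<in> orbit_stabilizer p"
    then obtain g where "g \<in> G" "aff_act u p = aff_act g p" using mem_orbit_self by blast
    then show "u \<in> U \<inter> ?S \<inter> ?T"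
      using u recover subgroup.subset[OF subgroup_U] by auto
  next
    fix u assume u: "u \<in> U \<inter> ?S \<inter> ?T"
    then have "h u \<in> G" "aff_act u p = aff_act (h u) p" by auto
    then have "aff_act u p \<in> orbit p" by blast
    then show "u \<in> orbit_stabilizer p" using u mem_orbit_stabilizer_iff[OF _ mem_orbit_self] by blast
  qed
  moreover have "zariski_closed_in ?X ?T"
    using h by (intro zariski_closed_in_equalizer poly_fun_compose[OF poly_fun_aff_act] poly_fun_aff_act)
  ultimately show ?thesis
    using assms(1,2) zariski_closed_in_preimage[OF P h] by (simp add: zariski_closed_in_Int)
qed

end

theorem proposition6p6:
  fixes J :: "real^'n^'n" and G U :: "'n aff set" and p :: "real^'n"
  assumes "nondeg_sym_form J"
    and "algebraic_subgroup J G"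
    and "acts_transitively_on (centralizer_in J G) UNIV"
    and "is_unipotent_radical J (centralizer_in J G) U"
    and "acts_transitively_on U UNIV"
  shows "algebraic_subgroup J {u \<in> U. aff_act u ` ((\<lambda>g. aff_act g p) ` G) \<subseteq> (\<lambda>g. aff_act g p) ` G}
       \<and> {u \<in> U. aff_act u ` ((\<lambda>g. aff_act g p) ` G) \<subseteq> (\<lambda>g. aff_act g p) ` G} \<subseteq> U
       \<and> acts_transitively_on {u \<in> U. aff_act u ` ((\<lambda>g. aff_act g p) ` G) \<subseteq> (\<lambda>g. aff_act g p) ` G}
                               ((\<lambda>g. aff_act g p) ` G)
       \<and> normal {u \<in> U. aff_act u p = p}
           ((iso_group J)\<lparr>carrier := {u \<in> U. aff_act u ` ((\<lambda>g. aff_act g p) ` G) \<subseteq> (\<lambda>g. aff_act g p) ` G}\<rparr>)"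
proof -
  have G: "subgroup G (iso_group J)" "zariski_closed_in (carrier (iso_group J)) G"
    using assms(2) unfolding algebraic_subgroup_def by auto
  have U: "subgroup U (iso_group J)" "zariski_closed_in (carrier (iso_group J)) U"
    and UL: "U \<subseteq> centralizer_in J G"
    using assms(4) unfolding is_unipotent_radical_def algebraic_subgroup_def by auto
  interpret centralizing_subgroups J G U
    by (rule centralizing_subgroups.intro[OF group_iso_group[OF assms(1)] G(1) U(1)])
      (use UL in \<open>auto simp: centralizer_in_def\<close>)
  show ?thesis
    using subgroup_orbit_stabilizer zariski_closed_orbit_stabilizer[OF G(2) U(2) assms(5)]
      transitive_orbit_stabilizer[OF assms(5)] normal_point_stabilizer
    by (auto simp: algebraic_subgroup_def)
qed

end
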